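(* Let $\mathcal{X}\subseteq\mathbb{R}^d$ be nonempty, closed and convex, and let $f=\frac1n\sum_{i=1}^nf_i$ with each $f_i:\mathbb{R}^d\to\mathbb{R}$ differentiable; let $x_\star\in\operatorname{arg\,min}_{x\in\mathcal{X}}f(x)$ and assume each $f_i$ has a constrained minimizer $x_{\star,i}\in\operatorname{arg\,min}_{x\in\mathcal{X}}f_i(x)$; let $D:=\max_{1\le i\le n}\|x_{\star,i}-x_\star\|$. Let $\{x_k\}\subseteq\mathcal{X}$ be generated by $x_{k+1}\in\operatorname{arg\,min}_{z\in\mathcal{X}\cap\mathcal{B}(x_k,t_k)}\langle\nabla f_{i_k}(x_k),z\rangle$ with $i_k\in\{1,\dots,n\}$. Fix $k$ and assume $\nabla f_{i_k}(x_k)\ne\nabla f_{i_k}(x_{\star,i_k})$ and $$0<t_k\le\frac{\langle\nabla f_{i_k}(x_k)-\nabla f_{i_k}(x_{\star,i_k}),x_k-x_{\star,i_k}\rangle}{\|\nabla f_{i_k}(x_k)-\nabla f_{i_k}(x_{\star,i_k})\|}.$$ Then $\|x_{k+1}-x_{\star,i_k}\|^2\le\|x_k-x_{\star,i_k}\|^2-t_k^2$, and consequently $\|x_{k+1}-x_\star\|^2\le\|x_k-x_\star\|^2-t_k^2+2Dt_k$.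
   Context: $\|\cdot\|$ is the Euclidean norm, $\mathcal{B}(x,t):=\{y:\|y-x\|\le t\}$. *)

theory Defs
  imports "HOL-Analysis.Analysis"
begin

definition is_argmin_on :: "('a \<Rightarrow> real) \<Rightarrow> 'a set \<Rightarrow> 'a \<Rightarrow> bool" where
  "is_argmin_on g S x \<longleftrightarrow> x \<in> S \<and> (\<forall>y\<in>S. g x \<le> g y)"

end

theory Submission
  imports Defs
begin

(* Write a = x_k, b = x_{star,i_k}, p = x_{k+1}, g and gs for the gradients of f_{i_k} at a and b,
   and w = g - gs. If p were farther from b than claimed, p could be moved a little towards b
   without leaving X or the ball of radius t around a; minimality of p for the linear objective
   then gives g.(b - p) >= 0, and first-order optimality of b gives gs.(p - b) >= 0. With the
   step-size condition t |w| <= w.(a - b) this forces w.(p - a) <= -t |w|, which within the ball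
   only p = a - t w/|w| attains, and that point satisfies the bound after all. The bound for x_star
   follows by expanding squares and Cauchy-Schwarz with |b - x_star| <= D. *)

lemma convex_argmin_gradient_inner_nonneg:
  fixes F :: "'a::real_inner \<Rightarrow> real"
  assumes "convex X" and "is_argmin_on F X b"
    and "(F has_derivative (\<lambda>h. G \<bullet> h)) (at b)" and "z \<in> X"
  shows "G \<bullet> (z - b) \<ge> 0"
proof (rule ccontr)
  assume "\<not> ?thesis"
  have "((\<lambda>s. b + s *\<^sub>R (z - b)) has_derivative (\<lambda>s. s *\<^sub>R (z - b))) (at 0)"
    by (intro derivative_eq_intros) auto
  then have "((\<lambda>s. F (b + s *\<^sub>R (z - b))) has_derivative (\<lambda>s. G \<bullet> (s *\<^sub>R (z - b)))) (at 0)"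
    by (rule has_derivative_compose) (simp add: assms(3))
  then have "DERIV (\<lambda>s. F (b + s *\<^sub>R (z - b))) 0 :> G \<bullet> (z - b)"
    by (simp add: has_field_derivative_def mult.commute[of _ "G \<bullet> (z - b)"])
  from DERIV_neg_dec_right[OF this] \<open>\<not> ?thesis\<close> obtain d where "d > 0"
    and decr: "\<And>s. 0 < s \<Longrightarrow> s < d \<Longrightarrow> F (b + s *\<^sub>R (z - b)) < F b"
    by force
  define s where "s = min (d / 2) 1"
  have s: "0 < s" "s < d" "s \<le> 1"
    using \<open>d > 0\<close> by (auto simp: s_def)
  have "b + s *\<^sub>R (z - b) = (1 - s) *\<^sub>R b + s *\<^sub>R z"
    by (simp add: algebra_simps)
  also have "\<dots> \<in> X"
    using assms(1,2,4) s by (intro convexD) (auto simp: is_argmin_on_def)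
  finally have "F b \<le> F (b + s *\<^sub>R (z - b))"
    using assms(2) by (simp add: is_argmin_on_def)
  with decr[OF s(1,2)] show False
    by simp
qed

lemma antiparallel_if_inner_le_minus_norm:
  fixes v w :: "'a::real_inner"
  assumes "norm v \<le> t" and "w \<bullet> v \<le> - t * norm w"
  shows "norm w *\<^sub>R v = - t *\<^sub>R w"
proof -
  have "0 \<le> t"
    using assms(1) norm_ge_zero[of v] by linarith
  have "(norm (norm w *\<^sub>R v + t *\<^sub>R w))\<^sup>2
      = (norm w)\<^sup>2 * ((norm v)\<^sup>2 + t\<^sup>2) + 2 * t * norm w * (w \<bullet> v)"
    using dot_norm[of "norm w *\<^sub>R v" "t *\<^sub>R w"]
    by (simp add: power_mult_distrib algebra_simps inner_commute)
  also have "\<dots> \<le> (norm w)\<^sup>2 * (2 * t\<^sup>2) + 2 * t * norm w * (- t * norm w)"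
    using assms \<open>0 \<le> t\<close>
    by (intro add_mono mult_left_mono mult_right_mono) (auto simp: power_mono)
  also have "\<dots> = 0"
    by (simp add: power2_eq_square)
  finally show ?thesis
    by (simp add: add_eq_0_iff)
qed

lemma segment_towards_in_cball:
  fixes a b p :: "'a::real_inner"
  assumes "norm (p - a) \<le> t" and "(norm (a - b))\<^sup>2 - t\<^sup>2 < (norm (p - b))\<^sup>2"
  shows "\<exists>s. 0 < s \<and> s \<le> 1 \<and> norm (p + s *\<^sub>R (b - p) - a) \<le> t"
proof -
  define Q where "Q = (norm (a - b))\<^sup>2 - (norm (p - b))\<^sup>2"
  define N where "N = (norm (b - p))\<^sup>2"
  define s where "s = min 1 ((t\<^sup>2 - Q) / (N + 1))"
  have "N \<ge> 0" "Q < t\<^sup>2"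
    using assms(2) by (auto simp: N_def Q_def)
  then have s: "0 < s" "s \<le> 1" "s * N \<le> t\<^sup>2 - Q"
    unfolding s_def by (auto simp: min_def field_simps intro: order_trans[of _ "t\<^sup>2 - Q"])
  have "(norm (p + s *\<^sub>R (b - p) - a))\<^sup>2 = (1 - s) * (norm (p - a))\<^sup>2 + s * (Q + s * N)"
    unfolding Q_def N_def power2_norm_eq_inner
    by (simp add: inner_simps inner_commute algebra_simps power2_eq_square)
  also have "\<dots> \<le> (1 - s) * t\<^sup>2 + s * t\<^sup>2"
    using assms(1) s by (intro add_mono mult_left_mono) (auto simp: power_mono)
  finally have "(norm (p + s *\<^sub>R (b - p) - a))\<^sup>2 \<le> t\<^sup>2"
    by (simp add: algebra_simps)
  then show ?thesis
    using s assms(1) norm_ge_zero[of "p - a"] by (metis power2_le_imp_le order_trans)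
qed

lemma linear_step_in_cball_approaches_stationary_point:
  fixes a b p g gs :: "'a::real_inner"
  assumes "convex X" and "b \<in> X"
    and p_min: "is_argmin_on (\<lambda>z. g \<bullet> z) (X \<inter> cball a t) p"
    and b_stationary: "\<And>z. z \<in> X \<Longrightarrow> gs \<bullet> (z - b) \<ge> 0"
    and "g \<noteq> gs" and step: "t * norm (g - gs) \<le> (g - gs) \<bullet> (a - b)"
  shows "(norm (p - b))\<^sup>2 \<le> (norm (a - b))\<^sup>2 - t\<^sup>2"
proof (rule ccontr)
  assume far: "\<not> ?thesis"
  define w where "w = g - gs"
  have "p \<in> X" and p_ball: "norm (p - a) \<le> t"
    and p_le: "\<And>z. z \<in> X \<Longrightarrow> norm (z - a) \<le> t \<Longrightarrow> g \<bullet> p \<le> g \<bullet> z"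
    using p_min by (auto simp: is_argmin_on_def dist_norm norm_minus_commute)
  have "0 \<le> t"
    using p_ball norm_ge_zero[of "p - a"] by linarith
  have "(norm (a - b))\<^sup>2 - t\<^sup>2 < (norm (p - b))\<^sup>2"
    using far by linarith
  then obtain s where s: "0 < s" "s \<le> 1" "norm (p + s *\<^sub>R (b - p) - a) \<le> t"
    using segment_towards_in_cball[OF p_ball] by blast
  have "p + s *\<^sub>R (b - p) = (1 - s) *\<^sub>R p + s *\<^sub>R b"
    by (simp add: algebra_simps)
  also have "\<dots> \<in> X"
    using \<open>convex X\<close> \<open>p \<in> X\<close> \<open>b \<in> X\<close> s by (intro convexD) auto
  finally have "g \<bullet> p \<le> g \<bullet> (p + s *\<^sub>R (b - p))"
    using p_le s(3) by blast
  then have "0 \<le> g \<bullet> (b - p)"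
    using s(1) by (simp add: inner_simps zero_le_mult_iff)
  then have "w \<bullet> (p - a) \<le> - t * norm w"
    using b_stationary[OF \<open>p \<in> X\<close>] step
    by (simp add: w_def inner_simps inner_commute algebra_simps)
  then have antiparallel: "norm w *\<^sub>R (p - a) = - t *\<^sub>R w"
    by (rule antiparallel_if_inner_le_minus_norm[OF p_ball])
  have "norm w * ((p - a) \<bullet> (b - a)) = (norm w *\<^sub>R (p - a)) \<bullet> (b - a)"
    by simp
  also have "\<dots> = t * (w \<bullet> (a - b))"
    unfolding antiparallel by (simp add: inner_diff_right algebra_simps)
  also have "\<dots> \<ge> t * (t * norm w)"
    using step \<open>0 \<le> t\<close> by (intro mult_left_mono) (auto simp: w_def)
  finally have "t\<^sup>2 \<le> (p - a) \<bullet> (b - a)"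
    using \<open>g \<noteq> gs\<close> by (simp add: w_def power2_eq_square mult.left_commute)
  moreover have "(norm (a - b))\<^sup>2 - (norm (p - b))\<^sup>2 = 2 * ((p - a) \<bullet> (b - a)) - (norm (p - a))\<^sup>2"
    unfolding power2_norm_eq_inner by (simp add: inner_simps inner_commute algebra_simps)
  moreover have "(norm (p - a))\<^sup>2 \<le> t\<^sup>2"
    using p_ball by (simp add: power_mono)
  ultimately show False
    using far by linarith
qed

lemma power2_dist_recenter_le:
  fixes a b c p :: "'a::real_inner"
  assumes "norm (p - a) \<le> t" and "norm (b - c) \<le> D"
  shows "(norm (p - c))\<^sup>2 \<le> (norm (a - c))\<^sup>2 + ((norm (p - b))\<^sup>2 - (norm (a - b))\<^sup>2) + 2 * D * t"
proof -
  have "(norm (p - c))\<^sup>2 = (norm (a - c))\<^sup>2 + ((norm (p - b))\<^sup>2 - (norm (a - b))\<^sup>2)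
      + 2 * ((p - a) \<bullet> (b - c))"
    unfolding power2_norm_eq_inner by (simp add: inner_simps inner_commute algebra_simps)
  moreover have "(p - a) \<bullet> (b - c) \<le> t * D"
  proof -
    have "0 \<le> t"
      using assms(1) norm_ge_zero[of "p - a"] by linarith
    then have "norm (p - a) * norm (b - c) \<le> t * D"
      using assms by (intro mult_mono) auto
    then show ?thesis
      using norm_cauchy_schwarz[of "p - a" "b - c"] by linarith
  qed
  ultimately show ?thesis
    by (simp add: algebra_simps)
qed

theorem theorem12:
  fixes X :: "(real ^ 'd) set"
    and n :: nat
    and fs :: "nat \<Rightarrow> real ^ 'd \<Rightarrow> real"
    and grad :: "nat \<Rightarrow> real ^ 'd \<Rightarrow> real ^ 'd"
    and f :: "real ^ 'd \<Rightarrow> real"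
    and xstar :: "real ^ 'd"
    and xs :: "nat \<Rightarrow> real ^ 'd"
    and x :: "nat \<Rightarrow> real ^ 'd"
    and i :: "nat \<Rightarrow> nat"
    and t :: "nat \<Rightarrow> real"
    and D :: real
    and k :: nat
  assumes "X \<noteq> {}" and "closed X" and "convex X"
    and "n \<ge> 1"
    and "f = (\<lambda>y. (1 / real n) * (\<Sum>j = 1..n. fs j y))"
    and "\<And>j y. j \<in> {1..n} \<Longrightarrow> (fs j has_derivative (\<lambda>h. grad j y \<bullet> h)) (at y)"
    and "is_argmin_on f X xstar"
    and "\<And>j. j \<in> {1..n} \<Longrightarrow> is_argmin_on (fs j) X (xs j)"
    and "D = Max ((\<lambda>j. norm (xs j - xstar)) ` {1..n})"
    and "\<And>m. x m \<in> X"
    and "\<And>m. i m \<in> {1..n}"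
    and "\<And>m. is_argmin_on (\<lambda>z. grad (i m) (x m) \<bullet> z) (X \<inter> cball (x m) (t m)) (x (Suc m))"
    and "grad (i k) (x k) \<noteq> grad (i k) (xs (i k))"
    and "0 < t k"
    and "t k \<le> ((grad (i k) (x k) - grad (i k) (xs (i k))) \<bullet> (x k - xs (i k)))
                / norm (grad (i k) (x k) - grad (i k) (xs (i k)))"
  shows "(norm (x (Suc k) - xs (i k)))\<^sup>2 \<le> (norm (x k - xs (i k)))\<^sup>2 - (t k)\<^sup>2
     \<and> (norm (x (Suc k) - xstar))\<^sup>2 \<le> (norm (x k - xstar))\<^sup>2 - (t k)\<^sup>2 + 2 * D * t k"
proof -
  let ?a = "x k" and ?b = "xs (i k)" and ?p = "x (Suc k)"
    and ?g = "grad (i k) (x k)" and ?gs = "grad (i k) (xs (i k))"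
  have ik: "i k \<in> {1..n}"
    using assms(11) .
  have b_min: "is_argmin_on (fs (i k)) X ?b"
    using assms(8)[OF ik] .
  then have "?b \<in> X"
    by (simp add: is_argmin_on_def)
  have b_stationary: "\<And>z. z \<in> X \<Longrightarrow> ?gs \<bullet> (z - ?b) \<ge> 0"
    using convex_argmin_gradient_inner_nonneg[OF assms(3) b_min assms(6)[OF ik]] .
  have step: "t k * norm (?g - ?gs) \<le> (?g - ?gs) \<bullet> (?a - ?b)"
    using assms(13,15) by (simp add: pos_le_divide_eq)
  have near_b: "(norm (?p - ?b))\<^sup>2 \<le> (norm (?a - ?b))\<^sup>2 - (t k)\<^sup>2"
    using linear_step_in_cball_approaches_stationary_point[OF assms(3) \<open>?b \<in> X\<close> assms(12)
        b_stationary assms(13) step] .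
  have "norm (?p - ?a) \<le> t k"
    using assms(12) by (simp add: is_argmin_on_def dist_norm norm_minus_commute)
  moreover have "norm (?b - xstar) \<le> D"
    unfolding assms(9) using ik by (intro Max_ge) auto
  ultimately show ?thesis
    using near_b power2_dist_recenter_le[of ?p ?a "t k" ?b xstar D] by linarith
qed

end
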